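(* Let $X_1,X_2,\dots$ be independent random variables such that $\Pr\{0\le X_i\le1\}=1$ and $\mathbb{E}[X_i]=\mu_i$ for $i\in\mathbb{N}$. Define $S_n=\sum_{i=1}^nX_i$, $\overline{\mu}_n=\frac1n\sum_{i=1}^n\mu_i$, and $\mathcal{V}(s,n)=n\ln(\overline{\mu}_ne^s+1-\overline{\mu}_n)$ for $s\in\mathbb{R}$, $n\in\mathbb{N}$. Let $m$ be a positive integer with $0<\overline{\mu}_m<1$. Then for all $\theta\in(0,1)$, \[ \Pr\Big\{\sup_{n\in\mathbb{N}}\big[\zeta(S_n-m\theta)-\mathcal{V}(\zeta,n)+\mathcal{V}(\zeta,m)\big]\ge0\Big\}\le\Big[\exp\Big(\theta\ln\frac{\overline{\mu}_m}{\theta}+(1-\theta)\ln\frac{1-\overline{\mu}_m}{1-\theta}\Big)\Big]^m, \] where $\zeta=\ln\frac{\theta(1-\overline{\mu}_m)}{\overline{\mu}_m(1-\theta)}$.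
   Context: $\mathbb{N}$ denotes the set of positive integers. *)

theory Defs
  imports "HOL-Probability.Probability"
begin

definition mu_bar :: "(nat \<Rightarrow> real) \<Rightarrow> nat \<Rightarrow> real" where
  "mu_bar \<mu> n = (\<Sum>i=1..n. \<mu> i) / real n"

definition calV :: "(nat \<Rightarrow> real) \<Rightarrow> real \<Rightarrow> nat \<Rightarrow> real" where
  "calV \<mu> s n = real n * ln (mu_bar \<mu> n * exp s + 1 - mu_bar \<mu> n)"

end

theory Submission
  imports Defs
begin

text \<open>
  Since the \<open>X\<^sub>i\<close> take values in \<open>[0, 1]\<close>, convexity of \<open>exp\<close> gives
  \<open>E[exp (z X\<^sub>i)] \<le> \<mu>\<^sub>i e\<^sup>z + 1 - \<mu>\<^sub>i\<close>, and concavity of \<open>ln\<close> shows that the increments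
  \<open>V(z, i) - V(z, i - 1)\<close> dominate the logarithms of these bounds. Hence
  \<open>exp (z S\<^sub>n - V(z, n))\<close> is a product of independent nonnegative factors of mean at most 1.
  Stopping this product at the first time it reaches a level \<open>b\<close> shows (Ville's inequality)
  that its supremum is at least \<open>b\<close> with probability at most \<open>1 / b\<close>. The event of the
  theorem is that of level \<open>b = exp (\<zeta> m \<theta> - V(\<zeta>, m))\<close>, and for the stated \<open>\<zeta>\<close>
  the bound \<open>1 / b\<close> is the Bernoulli Chernoff bound on the right-hand side.
\<close>

section \<open>Stopped products\<close>

definition reaches :: "ennreal \<Rightarrow> nat \<Rightarrow> (nat \<Rightarrow> ennreal) \<Rightarrow> bool" where
  "reaches b k x \<longleftrightarrow> (\<exists>n\<le>k. b \<le> (\<Prod>i=1..n. x i))"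

primrec stopped_prod :: "ennreal \<Rightarrow> nat \<Rightarrow> (nat \<Rightarrow> ennreal) \<Rightarrow> ennreal" where
  "stopped_prod b 0 x = 1"
| "stopped_prod b (Suc k) x = stopped_prod b k x * (if reaches b k x then 1 else x (Suc k))"

lemma reaches_mono: "reaches b k x \<Longrightarrow> k \<le> l \<Longrightarrow> reaches b l x"
  unfolding reaches_def by (meson order_trans)

lemma stopped_prod_eq_prod: "\<not> reaches b k x \<Longrightarrow> stopped_prod b k x = (\<Prod>i=1..k. x i)"
proof (induction k)
  case (Suc k)
  then have "\<not> reaches b k x" using reaches_mono le_SucI by blast
  with Suc.IH show ?case by (simp add: prod.nat_ivl_Suc')
qed simp

lemma le_stopped_prod_if_reaches: "reaches b k x \<Longrightarrow> b \<le> stopped_prod b k x"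
proof (induction k)
  case 0
  then show ?case by (simp add: reaches_def)
next
  case (Suc k)
  show ?case
  proof (cases "reaches b k x")
    case True
    with Suc.IH show ?thesis by simp
  next
    case False
    with Suc.prems have "b \<le> (\<Prod>i=1..Suc k. x i)"
      by (auto simp: reaches_def le_Suc_eq)
    with False show ?thesis by (simp add: stopped_prod_eq_prod prod.nat_ivl_Suc')
  qed
qed

lemma reaches_cong: "(\<And>i. i \<in> {1..k} \<Longrightarrow> x i = y i) \<Longrightarrow> reaches b k x = reaches b k y"
  unfolding reaches_def by (intro ex_cong1 conj_cong refl arg_cong[where f="(\<le>) b"] prod.cong) auto

lemma stopped_prod_cong:
  "(\<And>i. i \<in> {1..k} \<Longrightarrow> x i = y i) \<Longrightarrow> stopped_prod b k x = stopped_prod b k y"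
proof (induction k)
  case (Suc k)
  then have "reaches b k x = reaches b k y" by (intro reaches_cong) auto
  with Suc show ?case by simp
qed simp

lemma measurable_reaches [measurable]:
  "{1..k} \<subseteq> K \<Longrightarrow> Measurable.pred (PiM K (\<lambda>_. borel)) (reaches b k)"
  unfolding reaches_def by measurable auto

lemma measurable_stopped_prod [measurable]:
  "{1..k} \<subseteq> K \<Longrightarrow> stopped_prod b k \<in> borel_measurable (PiM K (\<lambda>_. borel))"
proof (induction k)
  case (Suc k)
  then have "{1..k} \<subseteq> K" "Suc k \<in> K" by auto
  moreover note Suc.IH[measurable]
  ultimately show ?case by (subst stopped_prod.simps[abs_def]) measurable
qed (simp add: stopped_prod.simps[abs_def])

section \<open>Ville's inequality for products of independent factors\<close>

context prob_space
begin

lemma indep_var_nn_integral: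
  fixes X Y :: "'a \<Rightarrow> ennreal"
  assumes "indep_var borel X borel Y"
  shows "(\<integral>\<^sup>+\<omega>. X \<omega> * Y \<omega> \<partial>M) = (\<integral>\<^sup>+\<omega>. X \<omega> \<partial>M) * (\<integral>\<^sup>+\<omega>. Y \<omega> \<partial>M)"
proof -
  have "(\<lambda>_. borel :: ennreal measure) = case_bool borel borel"
    by (simp add: fun_eq_iff split: bool.split)
  with assms have "indep_vars (\<lambda>_. borel) (case_bool X Y) UNIV"
    unfolding indep_var_def by simp
  then show ?thesis
    using indep_vars_nn_integral[of UNIV "case_bool X Y"] by (simp add: UNIV_bool mult.commute)
qed

lemma measurable_past_fun:
  assumes indep: "indep_vars (\<lambda>_. borel) Z {1..}"
    and F: "F \<in> measurable (PiM {1..k} (\<lambda>_. borel)) N"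
    and local: "\<And>x y. (\<And>i. i \<in> {1..k} \<Longrightarrow> x i = y i) \<Longrightarrow> F x = F y"
  shows "(\<lambda>\<omega>. F (\<lambda>i. Z i \<omega>)) \<in> measurable M N"
proof -
  have "(\<lambda>\<omega>. restrict (\<lambda>i. Z i \<omega>) {1..k}) \<in> measurable M (PiM {1..k} (\<lambda>_. borel))"
    using indep by (intro measurable_restrict) (auto simp: indep_vars_def)
  from measurable_compose[OF this F] show ?thesis
    by (rule measurable_cong[THEN iffD1, rotated]) (auto intro: local)
qed

lemma indep_var_past_fun_next:
  assumes indep: "indep_vars (\<lambda>_. borel) Z {1..}"
    and F: "F \<in> borel_measurable (PiM {1..k} (\<lambda>_. borel))"
    and local: "\<And>x y. (\<And>i. i \<in> {1..k} \<Longrightarrow> x i = y i) \<Longrightarrow> F x = F y"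
  shows "indep_var borel (\<lambda>\<omega>. F (\<lambda>i. Z i \<omega>)) borel (Z (Suc k))"
proof -
  have "indep_var (PiM {1..k} (\<lambda>_. borel)) (\<lambda>\<omega>. restrict (\<lambda>i. Z i \<omega>) {1..k})
      (PiM {Suc k} (\<lambda>_. borel)) (\<lambda>\<omega>. restrict (\<lambda>i. Z i \<omega>) {Suc k})"
    by (rule indep_var_restrict[OF indep]) auto
  then have "indep_var borel (F \<circ> (\<lambda>\<omega>. restrict (\<lambda>i. Z i \<omega>) {1..k}))
      borel ((\<lambda>x. x (Suc k)) \<circ> (\<lambda>\<omega>. restrict (\<lambda>i. Z i \<omega>) {Suc k}))"
    by (rule indep_var_compose[OF _ F]) measurable
  moreover have "F \<circ> (\<lambda>\<omega>. restrict (\<lambda>i. Z i \<omega>) {1..k}) = (\<lambda>\<omega>. F (\<lambda>i. Z i \<omega>))"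
    by (auto simp: fun_eq_iff intro: local)
  ultimately show ?thesis by (simp add: comp_def)
qed

lemma nn_integral_stopped_prod_Suc_le:
  fixes Z :: "nat \<Rightarrow> 'a \<Rightarrow> ennreal"
  assumes indep: "indep_vars (\<lambda>_. borel) Z {1..}" and mean: "(\<integral>\<^sup>+\<omega>. Z (Suc k) \<omega> \<partial>M) \<le> 1"
  shows "(\<integral>\<^sup>+\<omega>. stopped_prod b (Suc k) (\<lambda>i. Z i \<omega>) \<partial>M) \<le> (\<integral>\<^sup>+\<omega>. stopped_prod b k (\<lambda>i. Z i \<omega>) \<partial>M)"
proof -
  define Y where "Y \<omega> = stopped_prod b k (\<lambda>i. Z i \<omega>)" for \<omega>
  define T where "T \<omega> \<longleftrightarrow> reaches b k (\<lambda>i. Z i \<omega>)" for \<omega>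
  \<comment> \<open>off the event \<open>T\<close>, \<open>Y\<close> picks up the factor \<open>Z (Suc k)\<close>, which is independent of \<open>G\<close>\<close>
  define G where "G \<omega> = (if T \<omega> then 0 else Y \<omega>)" for \<omega>
  have [measurable]: "Y \<in> borel_measurable M"
    unfolding Y_def by (rule measurable_past_fun[OF indep measurable_stopped_prod stopped_prod_cong]) auto
  have [measurable]: "Measurable.pred M T"
    unfolding T_def by (rule measurable_past_fun[OF indep measurable_reaches reaches_cong]) auto
  have [measurable]: "Z (Suc k) \<in> borel_measurable M"
    using indep by (auto simp: indep_vars_def)
  have indep_G: "indep_var borel G borel (Z (Suc k))"
    unfolding G_def T_def Y_def
  proof (rule indep_var_past_fun_next[OF indep])
    show "(\<lambda>x. if reaches b k x then 0 else stopped_prod b k x) \<in> borel_measurable (PiM {1..k} (\<lambda>_. borel))"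
      by measurable
  next
    fix x y :: "nat \<Rightarrow> ennreal"
    assume "\<And>i. i \<in> {1..k} \<Longrightarrow> x i = y i"
    then show "(if reaches b k x then 0 else stopped_prod b k x) = (if reaches b k y then 0 else stopped_prod b k y)"
      using reaches_cong[of k x y b] stopped_prod_cong[of k x y b] by simp
  qed
  have [measurable]: "G \<in> borel_measurable M"
    unfolding G_def by measurable
  have "(\<integral>\<^sup>+\<omega>. stopped_prod b (Suc k) (\<lambda>i. Z i \<omega>) \<partial>M)
      = (\<integral>\<^sup>+\<omega>. (if T \<omega> then Y \<omega> else 0) + G \<omega> * Z (Suc k) \<omega> \<partial>M)"
    by (intro nn_integral_cong) (simp add: T_def Y_def G_def)
  also have "\<dots> = (\<integral>\<^sup>+\<omega>. (if T \<omega> then Y \<omega> else 0) \<partial>M)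
      + (\<integral>\<^sup>+\<omega>. G \<omega> \<partial>M) * (\<integral>\<^sup>+\<omega>. Z (Suc k) \<omega> \<partial>M)"
    by (simp add: nn_integral_add indep_var_nn_integral[OF indep_G])
  also have "\<dots> \<le> (\<integral>\<^sup>+\<omega>. (if T \<omega> then Y \<omega> else 0) \<partial>M) + (\<integral>\<^sup>+\<omega>. G \<omega> \<partial>M)"
    using mean by (intro add_left_mono mult_left_le) auto
  also have "\<dots> = (\<integral>\<^sup>+\<omega>. Y \<omega> \<partial>M)"
    by (subst nn_integral_add[symmetric]) (auto intro!: nn_integral_cong simp: G_def)
  finally show ?thesis by (simp add: Y_def)
qed

lemma nn_integral_stopped_prod_le_1:
  fixes Z :: "nat \<Rightarrow> 'a \<Rightarrow> ennreal"
  assumes indep: "indep_vars (\<lambda>_. borel) Z {1..}"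
    and mean: "\<And>i. 1 \<le> i \<Longrightarrow> (\<integral>\<^sup>+\<omega>. Z i \<omega> \<partial>M) \<le> 1"
  shows "(\<integral>\<^sup>+\<omega>. stopped_prod b k (\<lambda>i. Z i \<omega>) \<partial>M) \<le> 1"
proof (induction k)
  case 0
  then show ?case by (simp add: emeasure_space_1)
next
  case (Suc k)
  with nn_integral_stopped_prod_Suc_le[OF indep mean] show ?case by (auto intro: order_trans)
qed

lemma sets_reaches:
  assumes "indep_vars (\<lambda>_. borel) Z {1..}"
  shows "{\<omega> \<in> space M. reaches b k (\<lambda>i. Z i \<omega>)} \<in> sets M"
  using measurable_past_fun[OF assms measurable_reaches reaches_cong, of k k b]
  by (simp add: pred_def)

lemma ville_inequality_finite_horizon:
  fixes Z :: "nat \<Rightarrow> 'a \<Rightarrow> ennreal"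
  assumes indep: "indep_vars (\<lambda>_. borel) Z {1..}"
    and mean: "\<And>i. 1 \<le> i \<Longrightarrow> (\<integral>\<^sup>+\<omega>. Z i \<omega> \<partial>M) \<le> 1"
  shows "b * emeasure M {\<omega> \<in> space M. reaches b k (\<lambda>i. Z i \<omega>)} \<le> 1"
proof -
  have "b * emeasure M {\<omega> \<in> space M. reaches b k (\<lambda>i. Z i \<omega>)}
      = (\<integral>\<^sup>+\<omega>. b * indicator {\<omega> \<in> space M. reaches b k (\<lambda>i. Z i \<omega>)} \<omega> \<partial>M)"
    using sets_reaches[OF indep] by (simp add: nn_integral_cmult_indicator)
  also have "\<dots> \<le> (\<integral>\<^sup>+\<omega>. stopped_prod b k (\<lambda>i. Z i \<omega>) \<partial>M)"
    by (intro nn_integral_mono) (auto simp: indicator_def le_stopped_prod_if_reaches)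
  also have "\<dots> \<le> 1"
    by (rule nn_integral_stopped_prod_le_1[OF indep mean])
  finally show ?thesis .
qed

theorem ville_inequality:
  fixes Z :: "nat \<Rightarrow> 'a \<Rightarrow> ennreal"
  assumes indep: "indep_vars (\<lambda>_. borel) Z {1..}"
    and mean: "\<And>i. 1 \<le> i \<Longrightarrow> (\<integral>\<^sup>+\<omega>. Z i \<omega> \<partial>M) \<le> 1"
  shows "b * emeasure M {\<omega> \<in> space M. b \<le> (SUP n. \<Prod>i=1..n. Z i \<omega>)} \<le> 1"
    (is "b * emeasure M ?E \<le> 1")
proof -
  define A where "A c k = {\<omega> \<in> space M. reaches c k (\<lambda>i. Z i \<omega>)}" for c k
  have A_sets: "A c k \<in> sets M" for c k
    unfolding A_def using indep by (rule sets_reaches)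
  \<comment> \<open>\<open>b \<le> (SUP n. \<dots>)\<close> only guarantees that every level \<open>c < b\<close> is reached\<close>
  have below: "c * emeasure M ?E \<le> 1" if "c < b" for c
  proof -
    have "?E \<subseteq> (\<Union>k. A c k)"
    proof
      fix \<omega> assume "\<omega> \<in> ?E"
      with that have "\<omega> \<in> space M" "c < (SUP n. \<Prod>i=1..n. Z i \<omega>)" by auto
      then obtain n where "\<omega> \<in> space M" "c \<le> (\<Prod>i=1..n. Z i \<omega>)"
        by (auto simp: less_SUP_iff intro: less_imp_le)
      then show "\<omega> \<in> (\<Union>k. A c k)" by (auto simp: A_def reaches_def)
    qed
    then have "c * emeasure M ?E \<le> c * emeasure M (\<Union>k. A c k)"
      using A_sets by (intro mult_left_mono emeasure_mono) auto
    also have "\<dots> = c * (SUP k. emeasure M (A c k))"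
      using A_sets by (subst SUP_emeasure_incseq) (auto simp: incseq_def A_def intro: reaches_mono)
    also have "\<dots> = (SUP k. c * emeasure M (A c k))"
      by (rule SUP_mult_left_ennreal)
    also have "\<dots> \<le> 1"
      unfolding A_def using ville_inequality_finite_horizon[OF indep mean] by (rule SUP_least)
    finally show ?thesis .
  qed
  show ?thesis
  proof (cases "b = 0")
    case False
    then have "b * emeasure M ?E = (SUP c\<in>{0<..<b}. c) * emeasure M ?E"
      by (simp add: zero_less_iff_neq_zero)
    also have "\<dots> = (SUP c\<in>{0<..<b}. c * emeasure M ?E)"
      by (rule SUP_mult_right_ennreal)
    also have "\<dots> \<le> 1"
      using below by (intro SUP_least) auto
    finally show ?thesis .
  qed simp
qed

end

section \<open>Variables with values in the unit interval\<close>

lemma exp_mult_le_chord: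
  fixes x z :: real
  assumes "0 \<le> x" "x \<le> 1"
  shows "exp (z * x) \<le> 1 + x * (exp z - 1)"
proof -
  have "exp ((1 - x) *\<^sub>R 0 + x *\<^sub>R z) \<le> (1 - x) * exp 0 + x * exp z"
    using assms by (intro convex_onD[OF exp_convex]) auto
  then show ?thesis by (simp add: algebra_simps)
qed

lemma bernoulli_mgf_pos:
  fixes p z :: real
  assumes "0 \<le> p" "p \<le> 1"
  shows "0 < p * exp z + 1 - p"
proof (cases "p = 0")
  case False
  with assms have "0 < p * exp z" by simp
  with assms show ?thesis by simp
qed simp

lemma (in prob_space) integrable_AE_unit_interval:
  fixes X :: "'a \<Rightarrow> real"
  assumes "random_variable borel X" and "AE \<omega> in M. 0 \<le> X \<omega> \<and> X \<omega> \<le> 1"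
  shows "integrable M X"
  using assms by (intro integrable_const_bound[where B=1]) (auto elim: eventually_mono)

lemma (in prob_space) expectation_AE_unit_interval:
  fixes X :: "'a \<Rightarrow> real"
  assumes "random_variable borel X" and bounded: "AE \<omega> in M. 0 \<le> X \<omega> \<and> X \<omega> \<le> 1"
  shows "0 \<le> expectation X \<and> expectation X \<le> 1"
  using integrable_AE_unit_interval[OF assms] bounded
  by (auto intro!: integral_ge_const integral_le_const elim: eventually_mono)

lemma (in prob_space) nn_integral_exp_le_bernoulli_mgf:
  fixes X :: "'a \<Rightarrow> real"
  assumes [measurable]: "random_variable borel X" and bounded: "AE \<omega> in M. 0 \<le> X \<omega> \<and> X \<omega> \<le> 1"
  shows "(\<integral>\<^sup>+\<omega>. exp (z * X \<omega>) \<partial>M) \<le> ennreal (expectation X * exp z + 1 - expectation X)"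
proof -
  have integrable: "integrable M X"
    using assms by (rule integrable_AE_unit_interval)
  have "(\<integral>\<^sup>+\<omega>. exp (z * X \<omega>) \<partial>M) \<le> (\<integral>\<^sup>+\<omega>. ennreal (1 + X \<omega> * (exp z - 1)) \<partial>M)"
    by (intro nn_integral_mono_AE, use bounded in eventually_elim)
       (auto intro!: ennreal_leI exp_mult_le_chord)
  also have "\<dots> = ennreal (\<integral>\<omega>. 1 + X \<omega> * (exp z - 1) \<partial>M)"
  proof (rule nn_integral_eq_integral)
    show "AE \<omega> in M. 0 \<le> 1 + X \<omega> * (exp z - 1)"
      using bounded
    proof eventually_elim
      case (elim \<omega>)
      then show ?case
        using bernoulli_mgf_pos[of "X \<omega>" z] by (simp add: algebra_simps)
    qed
  qed (use integrable in auto)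
  also have "(\<integral>\<omega>. 1 + X \<omega> * (exp z - 1) \<partial>M) = expectation X * exp z + 1 - expectation X"
    using integrable by (simp add: prob_space algebra_simps)
  finally show ?thesis .
qed

lemma mult_ln_add_ln_le:
  fixes a r p :: real
  assumes "0 < a" "0 < r" and mean: "real k * a + r = real (Suc k) * p"
  shows "real k * ln a + ln r \<le> real (Suc k) * ln p"
proof -
  have "0 < real (Suc k) * p"
    unfolding mean[symmetric] using assms by (intro add_nonneg_pos) simp_all
  then have p: "0 < p"
    by (simp add: zero_less_mult_iff)
  have "real k * ln a + ln r - real (Suc k) * ln p = real k * ln (a / p) + ln (r / p)"
    using assms p by (simp add: ln_div algebra_simps)
  also have "\<dots> \<le> real k * (a / p - 1) + (r / p - 1)"
    using assms p by (intro add_mono mult_left_mono ln_le_minus_one) auto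
  also have "\<dots> = (real k * a + r) / p - real (Suc k)"
    using p by (simp add: field_simps)
  also have "\<dots> = 0"
    using mean p by simp
  finally show ?thesis
    by simp
qed

lemma mu_bar_mix:
  "real k * (mu_bar \<mu> k * e + 1 - mu_bar \<mu> k) = (\<Sum>i=1..k. \<mu> i * e + 1 - \<mu> i)"
  by (cases "k = 0") (auto simp: mu_bar_def sum.distrib sum_subtractf sum_distrib_left sum_distrib_right field_simps)

lemma mu_bar_bounds:
  assumes "\<And>i. 1 \<le> i \<Longrightarrow> 0 \<le> \<mu> i \<and> \<mu> i \<le> 1"
  shows "0 \<le> mu_bar \<mu> k" "mu_bar \<mu> k \<le> 1"
proof -
  have "0 \<le> (\<Sum>i=1..k. \<mu> i)"
    using assms by (intro sum_nonneg) auto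
  moreover have "(\<Sum>i=1..k. \<mu> i) \<le> (\<Sum>i=1..k. 1)"
    using assms by (intro sum_mono) auto
  ultimately
  show "0 \<le> mu_bar \<mu> k" "mu_bar \<mu> k \<le> 1"
    by (auto simp: mu_bar_def divide_le_eq)
qed

lemma calV_Suc_ge:
  assumes "\<And>i. 1 \<le> i \<Longrightarrow> 0 \<le> \<mu> i \<and> \<mu> i \<le> 1"
  shows "calV \<mu> z k + ln (\<mu> (Suc k) * exp z + 1 - \<mu> (Suc k)) \<le> calV \<mu> z (Suc k)"
proof -
  define a where "a = mu_bar \<mu> k * exp z + 1 - mu_bar \<mu> k"
  define p where "p = mu_bar \<mu> (Suc k) * exp z + 1 - mu_bar \<mu> (Suc k)"
  define r where "r = \<mu> (Suc k) * exp z + 1 - \<mu> (Suc k)"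
  have "0 < a"
    unfolding a_def using mu_bar_bounds[of \<mu> k] assms by (intro bernoulli_mgf_pos) auto
  moreover have "0 < r"
    unfolding r_def using assms[of "Suc k"] by (intro bernoulli_mgf_pos) auto
  moreover have "real k * a + r = real (Suc k) * p"
    unfolding a_def r_def p_def mu_bar_mix by simp
  ultimately have "real k * ln a + ln r \<le> real (Suc k) * ln p"
    by (rule mult_ln_add_ln_le)
  then show ?thesis
    by (simp add: calV_def a_def r_def p_def)
qed

lemma bernoulli_chernoff_exponent:
  fixes p \<theta> :: real
  assumes "0 < p" "p < 1" "0 < \<theta>" "\<theta> < 1"
  defines "\<zeta> \<equiv> ln (\<theta> * (1 - p) / (p * (1 - \<theta>)))"
  shows "ln (p * exp \<zeta> + 1 - p) - \<zeta> * \<theta> = \<theta> * ln (p / \<theta>) + (1 - \<theta>) * ln ((1 - p) / (1 - \<theta>))"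
proof -
  define q where "q = (1 - p) / (1 - \<theta>)"
  have mix: "p * exp \<zeta> + 1 - p = q"
    using assms by (simp add: \<zeta>_def q_def field_simps)
  have "\<theta> * (1 - p) / (p * (1 - \<theta>)) = q / (p / \<theta>)"
    using assms by (simp add: q_def field_simps)
  then have \<zeta>_eq: "\<zeta> = ln q - ln (p / \<theta>)"
    using assms by (simp add: \<zeta>_def q_def ln_div ln_mult del: divide_divide_eq_left)
  show ?thesis
    unfolding mix unfolding q_def[symmetric] \<zeta>_eq by (simp add: algebra_simps)
qed

lemma exp_le_SUP_exp:
  fixes f :: "'i \<Rightarrow> real"
  assumes "0 \<le> (SUP n\<in>A. ereal (f n - c))"
  shows "ennreal (exp c) \<le> (SUP n\<in>A. ennreal (exp (f n)))"
proof (rule dense_le_bounded[of 0])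
  fix w assume w: "0 < w" "w < ennreal (exp c)"
  have "w < top"
    using w(2) by (rule order.strict_trans) simp
  then obtain r where r: "w = ennreal r" "0 \<le> r"
    by (auto simp: less_top_ennreal)
  with w have "0 < r" "r < exp c"
    by (auto simp: ennreal_less_iff)
  then have "ereal (ln r - c) < 0"
    using ln_less_cancel_iff[of r "exp c"] by simp
  also note assms
  finally obtain n where "n \<in> A" "ln r - c < f n - c"
    by (auto simp: less_SUP_iff)
  with \<open>0 < r\<close> have "r \<le> exp (f n)"
    using ln_less_cancel_iff[of r "exp (f n)"] by simp
  with r have "w \<le> ennreal (exp (f n))"
    by (simp add: ennreal_leI)
  with \<open>n \<in> A\<close> show "w \<le> (SUP n\<in>A. ennreal (exp (f n)))"
    by (rule SUP_upper2)
qed simp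

lemma prod_ennreal_exp_telescope:
  fixes a v :: "nat \<Rightarrow> real"
  shows "(\<Prod>i=1..n. ennreal (exp (a i - (v i - v (i - 1)))))
    = ennreal (exp ((\<Sum>i=1..n. a i) - (v n - v 0)))"
proof (induction n)
  case (Suc n)
  have "(\<Prod>i=1..Suc n. ennreal (exp (a i - (v i - v (i - 1)))))
      = (\<Prod>i=1..n. ennreal (exp (a i - (v i - v (i - 1))))) * ennreal (exp (a (Suc n) - (v (Suc n) - v n)))"
    by (simp add: prod.nat_ivl_Suc' mult.commute)
  also have "\<dots> = ennreal (exp ((\<Sum>i=1..n. a i) - (v n - v 0)) * exp (a (Suc n) - (v (Suc n) - v n)))"
    unfolding Suc.IH by (simp add: ennreal_mult)
  also have "\<dots> = ennreal (exp ((\<Sum>i=1..Suc n. a i) - (v (Suc n) - v 0)))"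
    by (simp add: sum.nat_ivl_Suc' exp_add[symmetric] algebra_simps)
  finally show ?case .
qed simp

lemma (in prob_space) nn_integral_exp_le_exp_calV_diff:
  fixes X :: "nat \<Rightarrow> 'a \<Rightarrow> real" and z :: real
  assumes rv: "\<And>i. 1 \<le> i \<Longrightarrow> random_variable borel (X i)"
    and bounded: "\<And>i. 1 \<le> i \<Longrightarrow> AE \<omega> in M. 0 \<le> X i \<omega> \<and> X i \<omega> \<le> 1"
  defines "v \<equiv> calV (\<lambda>i. expectation (X i)) z"
  shows "(\<integral>\<^sup>+\<omega>. exp (z * X (Suc k) \<omega>) \<partial>M) \<le> ennreal (exp (v (Suc k) - v k))"
proof -
  define \<mu> where "\<mu> = (\<lambda>i. expectation (X i))"
  define r where "r = \<mu> (Suc k) * exp z + 1 - \<mu> (Suc k)"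
  have \<mu>_bounds: "0 \<le> \<mu> i \<and> \<mu> i \<le> 1" if "1 \<le> i" for i
    unfolding \<mu>_def using rv[OF that] bounded[OF that] by (rule expectation_AE_unit_interval)
  then have "0 < r"
    unfolding r_def by (intro bernoulli_mgf_pos) auto
  moreover have "ln r \<le> v (Suc k) - v k"
    using calV_Suc_ge[of \<mu> z k] \<mu>_bounds by (simp add: v_def \<mu>_def r_def)
  ultimately have "r \<le> exp (v (Suc k) - v k)"
    by (metis exp_le_cancel_iff exp_ln)
  with nn_integral_exp_le_bernoulli_mgf[OF rv bounded, of "Suc k" z] show ?thesis
    unfolding r_def \<mu>_def by (auto intro: order_trans ennreal_leI)
qed

lemma (in prob_space) ville_inequality_unit_interval:
  fixes X :: "nat \<Rightarrow> 'a \<Rightarrow> real"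
  assumes indep: "indep_vars (\<lambda>_. borel) X {1..}"
    and bounded: "\<And>i. 1 \<le> i \<Longrightarrow> AE \<omega> in M. 0 \<le> X i \<omega> \<and> X i \<omega> \<le> 1"
  shows "b * emeasure M {\<omega> \<in> space M. b \<le> (SUP n. ennreal (exp (z * (\<Sum>i=1..n. X i \<omega>)
            - calV (\<lambda>i. expectation (X i)) z n)))} \<le> 1"
proof -
  define v where "v = calV (\<lambda>i. expectation (X i)) z"
  \<comment> \<open>normalized so that the partial products telescope to \<open>exp (z S\<^sub>n - v n)\<close>\<close>
  define Z where "Z i \<omega> = ennreal (exp (z * X i \<omega> - (v i - v (i - 1))))" for i \<omega>
  have rv: "random_variable borel (X i)" if "1 \<le> i" for i
    using indep that by (auto simp: indep_vars_def)
  have indep_Z: "indep_vars (\<lambda>_. borel) Z {1..}"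
    unfolding Z_def
    by (rule indep_vars_compose2[OF indep, where Y="\<lambda>i x. ennreal (exp (z * x - (v i - v (i - 1))))"])
       measurable
  have mean_Z: "(\<integral>\<^sup>+\<omega>. Z i \<omega> \<partial>M) \<le> 1" if "1 \<le> i" for i
  proof -
    obtain k where i: "i = Suc k"
      using \<open>1 \<le> i\<close> by (cases i) auto
    have [measurable]: "random_variable borel (X i)"
      using rv[OF \<open>1 \<le> i\<close>] .
    have "(\<integral>\<^sup>+\<omega>. Z i \<omega> \<partial>M) = (\<integral>\<^sup>+\<omega>. ennreal (exp (z * X i \<omega>)) * ennreal (exp (v k - v i)) \<partial>M)"
      by (intro nn_integral_cong) (simp add: Z_def i ennreal_mult[symmetric] exp_add[symmetric])
    also have "\<dots> = (\<integral>\<^sup>+\<omega>. exp (z * X i \<omega>) \<partial>M) * ennreal (exp (v k - v i))"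
      by (rule nn_integral_multc) measurable
    also have "\<dots> \<le> ennreal (exp (v i - v k)) * ennreal (exp (v k - v i))"
      unfolding i v_def by (intro mult_right_mono nn_integral_exp_le_exp_calV_diff rv bounded) auto
    also have "\<dots> = 1"
      by (simp flip: ennreal_mult exp_add)
    finally show ?thesis .
  qed
  have prod_Z: "(\<Prod>i=1..n. Z i \<omega>) = ennreal (exp (z * (\<Sum>i=1..n. X i \<omega>) - v n))" for n \<omega>
    using prod_ennreal_exp_telescope[of "\<lambda>i. z * X i \<omega>" v n]
    by (simp add: Z_def v_def calV_def sum_distrib_left)
  show ?thesis
    using ville_inequality[OF indep_Z mean_Z] unfolding prod_Z v_def .
qed

lemma (in prob_space) ville_inequality_unit_interval_log:
  fixes X :: "nat \<Rightarrow> 'a \<Rightarrow> real" and z :: real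
  assumes indep: "indep_vars (\<lambda>_. borel) X {1..}"
    and bounded: "\<And>i. 1 \<le> i \<Longrightarrow> AE \<omega> in M. 0 \<le> X i \<omega> \<and> X i \<omega> \<le> 1"
  defines "v \<equiv> calV (\<lambda>i. expectation (X i)) z"
  shows "prob {\<omega> \<in> space M. 0 \<le> (SUP n\<in>N. ereal (z * (\<Sum>i=1..n. X i \<omega>) - v n - c))} \<le> exp (- c)"
    (is "prob ?E \<le> _")
proof -
  define W where "W \<omega> = (SUP n. ennreal (exp (z * (\<Sum>i=1..n. X i \<omega>) - v n)))" for \<omega>
  have [measurable]: "(\<lambda>\<omega>. \<Sum>i=1..n. X i \<omega>) \<in> borel_measurable M" for n
    using indep by (intro borel_measurable_sum) (auto simp: indep_vars_def)
  have "?E \<subseteq> {\<omega> \<in> space M. ennreal (exp c) \<le> W \<omega>}"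
  proof safe
    fix \<omega> assume "0 \<le> (SUP n\<in>N. ereal (z * (\<Sum>i=1..n. X i \<omega>) - v n - c))"
    then have "ennreal (exp c) \<le> (SUP n\<in>N. ennreal (exp (z * (\<Sum>i=1..n. X i \<omega>) - v n)))"
      by (rule exp_le_SUP_exp)
    also have "\<dots> \<le> W \<omega>"
      unfolding W_def by (rule SUP_subset_mono) auto
    finally show "ennreal (exp c) \<le> W \<omega>" .
  qed
  moreover have "{\<omega> \<in> space M. ennreal (exp c) \<le> W \<omega>} \<in> sets M"
    unfolding W_def by measurable
  ultimately have "ennreal (exp c) * emeasure M ?E
      \<le> ennreal (exp c) * emeasure M {\<omega> \<in> space M. ennreal (exp c) \<le> W \<omega>}"
    by (intro mult_left_mono emeasure_mono) auto
  also have "\<dots> \<le> 1"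
    unfolding W_def v_def by (rule ville_inequality_unit_interval[OF indep bounded])
  finally show ?thesis
    by (simp add: emeasure_eq_measure ennreal_mult[symmetric] exp_minus field_simps)
qed

theorem theorem15:
  fixes M :: "'a measure" and X :: "nat \<Rightarrow> 'a \<Rightarrow> real" and m :: nat and \<theta> :: real
  assumes "prob_space M"
    and "prob_space.indep_vars M (\<lambda>_. borel) X {1..}"
    and "\<And>i. i \<ge> 1 \<Longrightarrow> AE \<omega> in M. 0 \<le> X i \<omega> \<and> X i \<omega> \<le> 1"
    and "m \<ge> 1"
    and "0 < mu_bar (\<lambda>i. prob_space.expectation M (X i)) m"
    and "mu_bar (\<lambda>i. prob_space.expectation M (X i)) m < 1"
    and "0 < \<theta>" and "\<theta> < 1"
  shows "let \<mu> = (\<lambda>i. prob_space.expectation M (X i));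
             mb = mu_bar \<mu> m;
             \<zeta> = ln (\<theta> * (1 - mb) / (mb * (1 - \<theta>)));
             S = (\<lambda>n \<omega>. \<Sum>i=1..n. X i \<omega>)
         in measure M {\<omega> \<in> space M.
               (SUP n\<in>{1..}. ereal (\<zeta> * (S n \<omega> - real m * \<theta>) - calV \<mu> \<zeta> n + calV \<mu> \<zeta> m)) \<ge> 0}
            \<le> (exp (\<theta> * ln (mb / \<theta>) + (1 - \<theta>) * ln ((1 - mb) / (1 - \<theta>)))) ^ m"
proof -
  interpret prob_space M by fact
  define \<mu> where "\<mu> = (\<lambda>i. expectation (X i))"
  define mb where "mb = mu_bar \<mu> m"
  define \<zeta> where "\<zeta> = ln (\<theta> * (1 - mb) / (mb * (1 - \<theta>)))"
  define c where "c = \<zeta> * (real m * \<theta>) - calV \<mu> \<zeta> m"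
  have "prob {\<omega> \<in> space M. 0 \<le> (SUP n\<in>{1..}. ereal (\<zeta> * (\<Sum>i=1..n. X i \<omega>) - calV \<mu> \<zeta> n - c))}
      \<le> exp (- c)"
    unfolding \<mu>_def by (rule ville_inequality_unit_interval_log[OF assms(2,3)])
  moreover have "exp (- c) = (exp (\<theta> * ln (mb / \<theta>) + (1 - \<theta>) * ln ((1 - mb) / (1 - \<theta>)))) ^ m"
  proof -
    have "- c = real m * (ln (mb * exp \<zeta> + 1 - mb) - \<zeta> * \<theta>)"
      by (simp add: c_def calV_def mb_def algebra_simps)
    also have "ln (mb * exp \<zeta> + 1 - mb) - \<zeta> * \<theta>
        = \<theta> * ln (mb / \<theta>) + (1 - \<theta>) * ln ((1 - mb) / (1 - \<theta>))"
      using assms(5-8) unfolding \<zeta>_def mb_def \<mu>_def by (rule bernoulli_chernoff_exponent)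
    finally show ?thesis
      by (simp add: exp_of_nat_mult)
  qed
  ultimately show ?thesis
    unfolding Let_def \<mu>_def[symmetric] mb_def[symmetric] \<zeta>_def[symmetric]
    by (simp add: c_def algebra_simps)
qed

end
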